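(* Let $\mathcal{X}$ be a set and let $G$ be an undirected graph on vertex set $\mathcal{X}$ with non-negative edge weights. Let $\varepsilon:\mathcal{X}\times\mathcal{X}\to\mathbb{R}\cup\{\infty\}$ be the shortest-path distance in $G$ (sum of edge weights along a path, minimized over paths). Let $M:\mathcal{X}^n\to\mathcal{Y}$ be a randomized algorithm. Suppose that for every pair $x,x'\in\mathcal{X}^n$ differing only in a single entry $i\in[n]$ such that $\{x_i,x'_i\}$ is an edge of $G$ with weight $\varepsilon_0$, we have $D_\infty(M(x)\|M(x'))\le \varepsilon_0$ (respectively, $D_*(M(x)\|M(x'))\le \frac12\varepsilon_0^2$). Then $M$ is $\varepsilon$-$\nabla$DP (respectively, $\varepsilon$-$\nabla$CDP).
   Context: For probability distributions $P,Q$ on a common space with $P\ll Q$: for $\lambda\in(1,\infty)$, $D_\lambda(P\|Q)=\frac{1}{\lambda-1}\log \mathbb{E}_{X\sim P}[(P(X)/Q(X))^{\lambda-1}]$ (Radon–Nikodym derivative), $D_*(P\|Q)=\sup_{\lambda\in(1,\infty)}\frac1\lambda D_\lambda(P\|Q)$, and $D_\infty(P\|Q)=\sup_{S:P(S)>0}\log(P(S)/Q(S))$; if $P\not\ll Q$ all these are $\infty$. For a symmetric non-negative function $\varepsilon:\mathcal{X}\times\mathcal{X}\to\mathbb{R}$, a randomized $M:\mathcal{X}^n\to\mathcal{Y}$ is $\varepsilon$-partially DP ($\varepsilon$-$\nabla$DP) if for all $x,x'\in\mathcal{X}^n$ differing only in entry $i$ and all measurable $S$, $\Pr[M(x)\in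 S]\le e^{\varepsilon(x_i,x'_i)}\Pr[M(x')\in S]$; it is $\varepsilon$-partially CDP ($\varepsilon$-$\nabla$CDP) if for all such $x,x'$, $D_*(M(x)\|M(x'))\le\frac12\varepsilon(x_i,x'_i)^2$. *)

theory Defs
  imports "HOL-Probability.Probability"
begin

text \<open>An undirected graph on the vertex type 'a is a set E of edges, each a two-element
  set of vertices; w assigns a weight to each edge.\<close>

definition undirected_graph :: "'a set set \<Rightarrow> bool" where
  "undirected_graph E \<longleftrightarrow> (\<forall>e\<in>E. card e = 2)"

definition is_walk :: "'a set set \<Rightarrow> 'a list \<Rightarrow> bool" where
  "is_walk E p \<longleftrightarrow> p \<noteq> [] \<and> (\<forall>k. Suc k < length p \<longrightarrow> {p ! k, p ! Suc k} \<in> E)"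

fun walk_weight :: "('a set \<Rightarrow> real) \<Rightarrow> 'a list \<Rightarrow> real" where
  "walk_weight w [] = 0"
| "walk_weight w [a] = 0"
| "walk_weight w (a # b # rest) = w {a, b} + walk_weight w (b # rest)"

text \<open>Shortest-path distance (infimum over empty set = \<infinity>).\<close>
definition sp_dist :: "'a set set \<Rightarrow> ('a set \<Rightarrow> real) \<Rightarrow> 'a \<Rightarrow> 'a \<Rightarrow> ereal" where
  "sp_dist E w u v =
     (INF p \<in> {p. is_walk E p \<and> hd p = u \<and> last p = v}. ereal (walk_weight w p))"

text \<open>P \<ll> Q is "absolutely_continuous Q P".\<close>

definition D_inf :: "'b measure \<Rightarrow> 'b measure \<Rightarrow> ereal" where
  "D_inf P Q = (if absolutely_continuous Q P
     then (SUP S \<in> {S \<in> sets P. measure P S > 0}. ereal (ln (measure P S / measure Q S)))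
     else \<infinity>)"

definition renyi_div :: "real \<Rightarrow> 'b measure \<Rightarrow> 'b measure \<Rightarrow> ereal" where
  "renyi_div lam P Q = (if absolutely_continuous Q P
     then (let I = (\<integral>\<^sup>+ x. ennreal ((enn2real (RN_deriv Q P x)) powr (lam - 1)) \<partial>P)
           in if I = \<infinity> then \<infinity> else ereal (ln (enn2real I) / (lam - 1)))
     else \<infinity>)"

definition D_star :: "'b measure \<Rightarrow> 'b measure \<Rightarrow> ereal" where
  "D_star P Q = (SUP lam \<in> {1<..}. renyi_div lam P Q / ereal lam)"

definition neighbours :: "nat \<Rightarrow> 'a list \<Rightarrow> 'a list \<Rightarrow> nat \<Rightarrow> bool" where
  "neighbours n x x' i \<longleftrightarrow> length x = n \<and> length x' = n \<and> i < n \<and>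
     (\<forall>j<n. j \<noteq> i \<longrightarrow> x ! j = x' ! j)"

text \<open>\<epsilon> may take the value \<infinity>, in which case the constraint is vacuous (e^\<infinity> = \<infinity>).\<close>
definition partial_DP :: "nat \<Rightarrow> ('a list \<Rightarrow> 'b measure) \<Rightarrow> ('a \<Rightarrow> 'a \<Rightarrow> ereal) \<Rightarrow> bool" where
  "partial_DP n M \<epsilon> \<longleftrightarrow> (\<forall>x x' i. neighbours n x x' i \<longrightarrow>
     (\<forall>S \<in> sets (M x). \<epsilon> (x ! i) (x' ! i) = \<infinity> \<or>
        measure (M x) S \<le> exp (real_of_ereal (\<epsilon> (x ! i) (x' ! i))) * measure (M x') S))"

definition partial_CDP :: "nat \<Rightarrow> ('a list \<Rightarrow> 'b measure) \<Rightarrow> ('a \<Rightarrow> 'a \<Rightarrow> ereal) \<Rightarrow> bool" where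
  "partial_CDP n M \<epsilon> \<longleftrightarrow> (\<forall>x x' i. neighbours n x x' i \<longrightarrow>
     D_star (M x) (M x') \<le> (\<epsilon> (x ! i) (x' ! i))\<^sup>2 / 2)"

end

theory Submission
  imports Defs
begin

text \<open>Walk from x_i to x'_i in the graph and replace the i-th entry one vertex at a time:
  consecutive databases are neighbours along an edge, so the edge hypothesis applies to each step.
  Pure privacy losses add up along the chain. For concentrated privacy the square root of
  2 D_* is subadditive: from D_*(P||Q) \<le> a^2/2 and D_*(Q||R) \<le> b^2/2 one gets
  D_*(P||R) \<le> (a + b)^2/2 by Hoelder's inequality on the densities, with exponents chosen to
  balance the two terms. Both bounds are closed conditions on the weight of the walk, so they
  pass to the infimum over walks, the shortest-path distance.\<close>

lemma is_walk_Cons_Cons: "is_walk E (a # b # p) \<longleftrightarrow> {a, b} \<in> E \<and> is_walk E (b # p)"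
  unfolding is_walk_def by (auto simp: less_Suc_eq_0_disj)

lemma walk_weight_nonneg:
  assumes "\<forall>e\<in>E. 0 \<le> w e"
  shows "is_walk E p \<Longrightarrow> 0 \<le> walk_weight w p"
  by (induction p rule: induct_list012) (use assms in \<open>auto simp: is_walk_Cons_Cons\<close>)

lemma sp_dist_in_closed:
  assumes nonneg: "\<forall>e\<in>E. 0 \<le> w e" and fin: "sp_dist E w u v \<noteq> \<infinity>" and "closed C"
    and walks: "\<And>p. is_walk E p \<Longrightarrow> hd p = u \<Longrightarrow> last p = v \<Longrightarrow> walk_weight w p \<in> C"
  shows "\<exists>e. sp_dist E w u v = ereal e \<and> e \<in> C"
proof -
  define W where "W = walk_weight w ` {p. is_walk E p \<and> hd p = u \<and> last p = v}"
  have sp: "sp_dist E w u v = (INF t\<in>W. ereal t)"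
    by (simp add: sp_dist_def W_def image_comp)
  have "W \<noteq> {}" using fin by (auto simp: sp top_ereal_def)
  moreover have "bdd_below W"
    using walk_weight_nonneg[OF nonneg] by (auto simp: W_def intro!: bdd_belowI[of _ 0])
  ultimately have "sp_dist E w u v = ereal (Inf W)" and "Inf W \<in> closure W"
    by (simp_all add: sp ereal_Inf' closure_contains_Inf)
  moreover have "closure W \<subseteq> C"
    using \<open>closed C\<close> walks by (intro closure_minimal) (auto simp: W_def)
  ultimately show ?thesis by blast
qed

lemma neighbours_eq_list_update: "neighbours n x x' i \<Longrightarrow> x' = x[i := x' ! i]"
  unfolding neighbours_def by (intro nth_equalityI) (auto simp: nth_list_update)

lemma walk_chain:
  fixes R :: "'a list \<Rightarrow> 'a list \<Rightarrow> real \<Rightarrow> bool"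
  assumes refl: "\<And>x. length x = n \<Longrightarrow> R x x 0"
    and trans: "\<And>x y z a b. length x = n \<Longrightarrow> length y = n \<Longrightarrow> length z = n \<Longrightarrow> 0 \<le> a \<Longrightarrow> 0 \<le> b
        \<Longrightarrow> R x y a \<Longrightarrow> R y z b \<Longrightarrow> R x z (a + b)"
    and edge: "\<And>x x' i. neighbours n x x' i \<Longrightarrow> {x ! i, x' ! i} \<in> E \<Longrightarrow> R x x' (w {x ! i, x' ! i})"
    and nonneg: "\<forall>e\<in>E. 0 \<le> w e"
  shows "is_walk E p \<Longrightarrow> length x = n \<Longrightarrow> i < n \<Longrightarrow> x ! i = hd p
    \<Longrightarrow> R x (x[i := last p]) (walk_weight w p)"
proof (induction p arbitrary: x rule: induct_list012)
  case 1
  then show ?case by (simp add: is_walk_def)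
next
  case (2 a)
  then have "x[i := last [a]] = x" by (simp add: list_update_same_conv)
  then show ?case using refl "2.prems"(2) by simp
next
  case (3 a b p)
  define y where "y = x[i := b]"
  have walk: "{a, b} \<in> E" "is_walk E (b # p)" using "3.prems"(1) by (simp_all add: is_walk_Cons_Cons)
  have "neighbours n x y i" "x ! i = a" "y ! i = b" using "3.prems" by (auto simp: neighbours_def y_def)
  then have "R x y (w {a, b})" using edge walk(1) by metis
  moreover have "R y (x[i := last (a # b # p)]) (walk_weight w (b # p))"
    using "3.IH"(2)[OF walk(2), of y] "3.prems" by (simp add: y_def)
  moreover have "0 \<le> w {a, b}" "0 \<le> walk_weight w (b # p)"
    using nonneg walk walk_weight_nonneg[OF nonneg] by auto
  moreover have "length y = n" "length (x[i := last (a # b # p)]) = n"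
    using "3.prems" by (simp_all add: y_def)
  ultimately show ?case using trans "3.prems"(2) by simp
qed

lemma sp_dist_bound_of_edge_bounds:
  fixes R :: "'a list \<Rightarrow> 'a list \<Rightarrow> real \<Rightarrow> bool"
  assumes refl: "\<And>x. length x = n \<Longrightarrow> R x x 0"
    and trans: "\<And>x y z a b. length x = n \<Longrightarrow> length y = n \<Longrightarrow> length z = n \<Longrightarrow> 0 \<le> a \<Longrightarrow> 0 \<le> b
        \<Longrightarrow> R x y a \<Longrightarrow> R y z b \<Longrightarrow> R x z (a + b)"
    and edge: "\<And>x x' i. neighbours n x x' i \<Longrightarrow> {x ! i, x' ! i} \<in> E \<Longrightarrow> R x x' (w {x ! i, x' ! i})"
    and nonneg: "\<forall>e\<in>E. 0 \<le> w e"
    and nb: "neighbours n x x' i" and fin: "sp_dist E w (x ! i) (x' ! i) \<noteq> \<infinity>"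
    and closed: "closed {t. R x x' t}"
  shows "\<exists>e. sp_dist E w (x ! i) (x' ! i) = ereal e \<and> R x x' e"
proof -
  have "R x x' (walk_weight w p)" if "is_walk E p" "hd p = x ! i" "last p = x' ! i" for p
    using walk_chain[OF refl trans edge nonneg that(1)] nb that neighbours_eq_list_update[OF nb]
    by (force simp: neighbours_def)
  then show ?thesis using sp_dist_in_closed[OF nonneg fin closed] by blast
qed

lemma measure_le_exp_mult_of_D_inf:
  assumes "finite_measure P" "finite_measure Q" and sets_eq: "sets P = sets Q"
    and D: "D_inf P Q \<le> ereal c" and S: "S \<in> sets P"
  shows "measure P S \<le> exp c * measure Q S"
proof (cases "measure P S = 0")
  case False
  interpret P: finite_measure P by fact
  interpret Q: finite_measure Q by fact
  have P_pos: "0 < measure P S" using False measure_nonneg[of P S] by linarith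
  have ac: "absolutely_continuous Q P"
    using D by (auto simp: D_inf_def split: if_splits)
  have "S \<notin> null_sets P" using P_pos S by (simp add: P.emeasure_eq_measure null_sets_def)
  then have "S \<notin> null_sets Q" using ac by (auto simp: absolutely_continuous_def)
  then have "measure Q S \<noteq> 0" using S sets_eq by (auto simp: Q.emeasure_eq_measure null_sets_def)
  then have Q_pos: "0 < measure Q S" using measure_nonneg[of Q S] by linarith
  have "ereal (ln (measure P S / measure Q S)) \<le> D_inf P Q"
    unfolding D_inf_def using ac P_pos S by (auto intro!: SUP_upper)
  then have "ln (measure P S / measure Q S) \<le> c" using D by (metis ereal_less_eq(3) order.trans)
  then have "measure P S / measure Q S \<le> exp c"
    using P_pos Q_pos by (metis divide_pos_pos exp_le_cancel_iff exp_ln)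
  then show ?thesis using Q_pos by (simp add: divide_le_eq)
qed simp

lemma D_star_le_iff: "D_star P Q \<le> ereal c \<longleftrightarrow> (\<forall>lam>1. renyi_div lam P Q / ereal lam \<le> ereal c)"
  unfolding D_star_def by (auto simp: SUP_le_iff)

lemma absolutely_continuous_of_D_star:
  assumes "D_star P Q \<le> ereal c"
  shows "absolutely_continuous Q P"
proof (rule ccontr)
  assume "\<not> absolutely_continuous Q P"
  then have "renyi_div 2 P Q / ereal 2 = \<infinity>" by (simp add: renyi_div_def)
  then show False using assms by (auto simp: D_star_le_iff dest: spec[of _ 2])
qed

lemma real_density_of_absolutely_continuous:
  assumes "sigma_finite_measure P" "sigma_finite_measure Q"
    and ac: "absolutely_continuous Q P" and sets_eq: "sets P = sets Q"
  obtains h where "h \<in> borel_measurable Q" "\<And>x. 0 \<le> h x" "P = density Q (\<lambda>x. ennreal (h x))"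
proof
  interpret Q: sigma_finite_measure Q by fact
  have "density Q (\<lambda>x. ennreal (enn2real (RN_deriv Q P x))) = density Q (RN_deriv Q P)"
    using Q.RN_deriv_finite[OF assms(1) ac sets_eq]
    by (intro density_cong) (auto elim!: AE_mp simp: less_top)
  also have "\<dots> = P" by (rule Q.density_RN_deriv[OF ac sets_eq])
  finally show "P = density Q (\<lambda>x. ennreal (enn2real (RN_deriv Q P x)))" ..
qed auto

lemma nn_integral_density_mult_powr:
  assumes [measurable]: "g \<in> borel_measurable M" "h \<in> borel_measurable M"
    and "\<And>x. 0 \<le> g x" "\<And>x. 0 \<le> h x"
  shows "(\<integral>\<^sup>+x. ennreal (h x * g x powr s) \<partial>density M (\<lambda>x. ennreal (g x)))
    = (\<integral>\<^sup>+x. ennreal (h x * g x powr (1 + s)) \<partial>M)"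
  using assms(3,4)
  by (simp add: nn_integral_density ennreal_mult[symmetric] powr_mult_base[symmetric] mult.left_commute)

lemma renyi_div_density:
  assumes "sigma_finite_measure Q" and [measurable]: "h \<in> borel_measurable Q" and h_nonneg: "\<And>x. 0 \<le> h x"
  shows "renyi_div lam (density Q (\<lambda>x. ennreal (h x))) Q
    = (let I = \<integral>\<^sup>+x. ennreal (h x powr lam) \<partial>Q in if I = \<infinity> then \<infinity> else ereal (ln (enn2real I) / (lam - 1)))"
proof -
  interpret Q: sigma_finite_measure Q by fact
  let ?P = "density Q (\<lambda>x. ennreal (h x))"
  have "AE x in Q. ennreal (h x) = RN_deriv Q ?P x"
    by (rule Q.RN_deriv_unique) auto
  then have "AE x in ?P. enn2real (RN_deriv Q ?P x) = h x"
    using h_nonneg by (auto simp: AE_density elim!: AE_mp)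
  then have "(\<integral>\<^sup>+x. ennreal (enn2real (RN_deriv Q ?P x) powr (lam - 1)) \<partial>?P)
      = (\<integral>\<^sup>+x. ennreal (1 * h x powr (lam - 1)) \<partial>?P)"
    by (intro nn_integral_cong_AE) (auto elim!: AE_mp)
  also have "\<dots> = (\<integral>\<^sup>+x. ennreal (h x powr lam) \<partial>Q)"
    using h_nonneg by (subst nn_integral_density_mult_powr) auto
  finally show ?thesis
    unfolding renyi_div_def by (simp add: absolutely_continuousI_density)
qed

lemma D_star_self_le_0:
  assumes "prob_space P"
  shows "D_star P P \<le> ereal 0"
  unfolding D_star_le_iff
proof (intro allI impI)
  fix lam :: real assume "1 < lam"
  interpret P: prob_space P by fact
  have "renyi_div lam (density P (\<lambda>x. ennreal 1)) P = 0"
    using renyi_div_density[of P "\<lambda>_. 1" lam] P.emeasure_space_1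
    by (simp add: P.sigma_finite_measure_axioms)
  then show "renyi_div lam P P / ereal lam \<le> ereal 0" by (simp add: density_1)
qed

lemma nn_integral_powr_neq_0:
  assumes "prob_space (density M (\<lambda>x. ennreal (h x)))"
    and [measurable]: "h \<in> borel_measurable M" and h_nonneg: "\<And>x. 0 \<le> h x" and "0 < mu"
  shows "(\<integral>\<^sup>+x. ennreal (h x powr mu) \<partial>M) \<noteq> 0"
proof
  assume "(\<integral>\<^sup>+x. ennreal (h x powr mu) \<partial>M) = 0"
  then have "AE x in M. ennreal (h x) = 0"
    using h_nonneg by (subst (asm) nn_integral_0_iff_AE) (auto elim!: AE_mp)
  then have "emeasure (density M (\<lambda>x. ennreal (h x))) (space M) = 0"
    by (subst emeasure_density) (auto simp: nn_integral_0_iff_AE elim!: AE_mp)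
  then show False using prob_space.emeasure_space_1[OF assms(1)] by simp
qed

lemma moment_bound_of_D_star:
  assumes "sigma_finite_measure Q" and [measurable]: "h \<in> borel_measurable Q" and "\<And>x. 0 \<le> h x"
    and D: "D_star (density Q (\<lambda>x. ennreal (h x))) Q \<le> ereal c" and mu: "1 < mu"
  shows "(\<integral>\<^sup>+x. ennreal (h x powr mu) \<partial>Q) \<noteq> \<infinity>"
    and "ln (enn2real (\<integral>\<^sup>+x. ennreal (h x powr mu) \<partial>Q)) \<le> mu * (mu - 1) * c"
proof -
  define I where "I = (\<integral>\<^sup>+x. ennreal (h x powr mu) \<partial>Q)"
  have "renyi_div mu (density Q (\<lambda>x. ennreal (h x))) Q / ereal mu \<le> ereal c"
    using D mu by (simp add: D_star_le_iff)
  moreover have "renyi_div mu (density Q (\<lambda>x. ennreal (h x))) Q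
      = (if I = \<infinity> then \<infinity> else ereal (ln (enn2real I) / (mu - 1)))"
    using renyi_div_density[OF assms(1-3)] by (simp add: I_def)
  ultimately show "I \<noteq> \<infinity>" and "ln (enn2real I) \<le> mu * (mu - 1) * c"
    using mu by (auto simp: field_simps split: if_splits)
qed

lemma nn_integral_Holder:
  fixes F G :: "'a \<Rightarrow> real"
  assumes [measurable]: "F \<in> borel_measurable M" "G \<in> borel_measurable M"
    and F_nonneg: "\<And>x. 0 \<le> F x" and G_nonneg: "\<And>x. 0 \<le> G x"
    and p: "1 < p" and q: "1 < q" and pq: "1 / p + 1 / q = 1"
    and A: "(\<integral>\<^sup>+x. ennreal (F x powr p) \<partial>M) = ennreal A" "0 < A"
    and B: "(\<integral>\<^sup>+x. ennreal (G x powr q) \<partial>M) = ennreal B" "0 < B"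
  shows "(\<integral>\<^sup>+x. ennreal (F x * G x) \<partial>M) \<le> ennreal (A powr (1 / p) * B powr (1 / q))"
proof -
  define a where "a = A powr (1 / p)"
  define b where "b = B powr (1 / q)"
  have ab: "0 < a" "0 < b" "a powr p = A" "b powr q = B"
    using A B p q by (auto simp: a_def b_def powr_powr)
  have Young: "F x * G x \<le> a * b * (F x powr p / (A * p) + G x powr q / (B * q))" for x
  proof -
    have "(F x / a) * (G x / b) \<le> (F x / a) powr p / p + (G x / b) powr q / q"
      using Youngs_inequality[OF p q pq, of "F x / a" "G x / b"] F_nonneg[of x] G_nonneg[of x] ab by simp
    also have "\<dots> = F x powr p / (A * p) + G x powr q / (B * q)"
      using F_nonneg G_nonneg ab by (simp add: powr_divide)
    finally show ?thesis using ab by (simp add: field_simps)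
  qed
  have "(\<integral>\<^sup>+x. ennreal (F x * G x) \<partial>M)
      \<le> (\<integral>\<^sup>+x. ennreal (a * b / (A * p)) * ennreal (F x powr p)
                + ennreal (a * b / (B * q)) * ennreal (G x powr q) \<partial>M)"
    using Young ab A B p q
    by (intro nn_integral_mono) (simp add: ennreal_mult'[symmetric] ennreal_plus[symmetric] field_simps)
  also have "\<dots> = ennreal (a * b / (A * p)) * ennreal A + ennreal (a * b / (B * q)) * ennreal B"
    by (simp add: nn_integral_add nn_integral_cmult A B)
  also have "\<dots> = ennreal (a * b * (1 / p + 1 / q))"
    using ab A B p q by (simp add: ennreal_mult'[symmetric] ennreal_plus[symmetric] field_simps)
  finally show ?thesis using pq by (simp add: a_def b_def)
qed

lemma ln_nn_integral_mult_le:
  fixes F G :: "'a \<Rightarrow> real"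
  assumes [measurable]: "F \<in> borel_measurable M" "G \<in> borel_measurable M"
    and "\<And>x. 0 \<le> F x" "\<And>x. 0 \<le> G x"
    and p: "1 < p" and q: "1 < q" and pq: "1 / p + 1 / q = 1"
    and A: "(\<integral>\<^sup>+x. ennreal (F x powr p) \<partial>M) \<notin> {0, \<infinity>}"
    and B: "(\<integral>\<^sup>+x. ennreal (G x powr q) \<partial>M) \<notin> {0, \<infinity>}"
    and I: "(\<integral>\<^sup>+x. ennreal (F x * G x) \<partial>M) \<noteq> 0"
  shows "(\<integral>\<^sup>+x. ennreal (F x * G x) \<partial>M) \<noteq> \<infinity>"
    and "ln (enn2real (\<integral>\<^sup>+x. ennreal (F x * G x) \<partial>M))
      \<le> ln (enn2real (\<integral>\<^sup>+x. ennreal (F x powr p) \<partial>M)) / p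
        + ln (enn2real (\<integral>\<^sup>+x. ennreal (G x powr q) \<partial>M)) / q"
proof -
  define A' where "A' = enn2real (\<integral>\<^sup>+x. ennreal (F x powr p) \<partial>M)"
  define B' where "B' = enn2real (\<integral>\<^sup>+x. ennreal (G x powr q) \<partial>M)"
  have A': "(\<integral>\<^sup>+x. ennreal (F x powr p) \<partial>M) = ennreal A'" "0 < A'"
    using A by (auto simp: A'_def enn2real_positive_iff less_top zero_less_iff_neq_zero)
  have B': "(\<integral>\<^sup>+x. ennreal (G x powr q) \<partial>M) = ennreal B'" "0 < B'"
    using B by (auto simp: B'_def enn2real_positive_iff less_top zero_less_iff_neq_zero)
  have Holder: "(\<integral>\<^sup>+x. ennreal (F x * G x) \<partial>M) \<le> ennreal (A' powr (1 / p) * B' powr (1 / q))"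
    by (rule nn_integral_Holder) (use assms A' B' in auto)
  then show fin: "(\<integral>\<^sup>+x. ennreal (F x * G x) \<partial>M) \<noteq> \<infinity>"
    by (auto simp: top_unique)
  have "0 < enn2real (\<integral>\<^sup>+x. ennreal (F x * G x) \<partial>M)"
    using fin I by (simp add: enn2real_positive_iff less_top zero_less_iff_neq_zero)
  moreover have "enn2real (\<integral>\<^sup>+x. ennreal (F x * G x) \<partial>M) \<le> A' powr (1 / p) * B' powr (1 / q)"
    using Holder A' B' by (simp add: enn2real_leI)
  ultimately have "ln (enn2real (\<integral>\<^sup>+x. ennreal (F x * G x) \<partial>M)) \<le> ln (A' powr (1 / p) * B' powr (1 / q))"
    by simp
  also have "\<dots> = ln A' / p + ln B' / q"
    using A' B' by (simp add: ln_mult ln_powr)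
  finally show "ln (enn2real (\<integral>\<^sup>+x. ennreal (F x * G x) \<partial>M))
      \<le> ln (enn2real (\<integral>\<^sup>+x. ennreal (F x powr p) \<partial>M)) / p
        + ln (enn2real (\<integral>\<^sup>+x. ennreal (G x powr q) \<partial>M)) / q"
    by (simp add: A'_def B'_def)
qed

lemma ln_moment_composed_density_le_Holder:
  fixes f g :: "'a \<Rightarrow> real"
  assumes "prob_space R"
    and f[measurable]: "f \<in> borel_measurable R" and f_nonneg: "\<And>x. 0 \<le> f x"
    and g[measurable]: "g \<in> borel_measurable R" and g_nonneg: "\<And>x. 0 \<le> g x"
    and Q: "Q = density R (\<lambda>x. ennreal (g x))" and P: "P = density Q (\<lambda>x. ennreal (f x))"
    and "prob_space P" "prob_space Q"
    and DPQ: "D_star P Q \<le> ereal \<rho>\<^sub>1" and DQR: "D_star Q R \<le> ereal \<rho>\<^sub>2"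
    and lam: "1 < lam" and p: "1 < p" and q: "1 < q" and pq: "1 / p + 1 / q = 1"
  shows "(\<integral>\<^sup>+x. ennreal ((g x * f x) powr lam) \<partial>R) \<noteq> \<infinity>"
    and "ln (enn2real (\<integral>\<^sup>+x. ennreal ((g x * f x) powr lam) \<partial>R))
      \<le> lam * (lam * p - 1) * \<rho>\<^sub>1 + (1 + (lam - 1) * q) * (lam - 1) * \<rho>\<^sub>2"
proof -
  have sf: "sigma_finite_measure Q" "sigma_finite_measure R"
    using assms by (simp_all add: prob_space_imp_sigma_finite)
  have fQ[measurable]: "f \<in> borel_measurable Q" and gQ[measurable]: "g \<in> borel_measurable Q"
    using Q by simp_all
  have PR: "P = density R (\<lambda>x. ennreal (g x * f x))"
    unfolding P Q by (subst density_density_eq) (auto simp: ennreal_mult f_nonneg g_nonneg)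
  define I where "I = (\<integral>\<^sup>+x. ennreal ((g x * f x) powr lam) \<partial>R)"
  define A where "A = (\<integral>\<^sup>+x. ennreal (f x powr (lam * p)) \<partial>Q)"
  define B where "B = (\<integral>\<^sup>+x. ennreal (g x powr (1 + (lam - 1) * q)) \<partial>R)"
  have I_Q: "I = (\<integral>\<^sup>+x. ennreal (f x powr lam * g x powr (lam - 1)) \<partial>Q)"
    unfolding I_def Q using f_nonneg g_nonneg
    by (subst nn_integral_density_mult_powr) (simp_all add: powr_mult mult.commute)
  have A_Q: "(\<integral>\<^sup>+x. ennreal ((f x powr lam) powr p) \<partial>Q) = A"
    by (simp add: A_def powr_powr)
  have B_Q: "(\<integral>\<^sup>+x. ennreal ((g x powr (lam - 1)) powr q) \<partial>Q) = B"
    using nn_integral_density_mult_powr[of g R "\<lambda>_. 1" "(lam - 1) * q"] g_nonneg Q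
    by (simp add: B_def powr_powr)
  have mu_gt: "1 < lam * p" "1 < 1 + (lam - 1) * q"
    using lam p q by (simp_all add: less_1_mult)
  then have A_bound: "A \<noteq> \<infinity>" "ln (enn2real A) \<le> lam * p * (lam * p - 1) * \<rho>\<^sub>1"
    and B_bound: "B \<noteq> \<infinity>" "ln (enn2real B) \<le> (1 + (lam - 1) * q) * ((lam - 1) * q) * \<rho>\<^sub>2"
    using moment_bound_of_D_star[OF sf(1) fQ f_nonneg DPQ[unfolded P]]
      moment_bound_of_D_star[OF sf(2) g g_nonneg DQR[unfolded Q]]
    unfolding A_def B_def by fastforce+
  have "A \<noteq> 0"
    using nn_integral_powr_neq_0[of Q f "lam * p"] \<open>prob_space P\<close> P mu_gt f_nonneg by (simp add: A_def)
  moreover have "B \<noteq> 0"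
    using nn_integral_powr_neq_0[of R g "1 + (lam - 1) * q"] \<open>prob_space Q\<close> Q mu_gt g_nonneg
    by (simp add: B_def)
  moreover have "I \<noteq> 0"
    using nn_integral_powr_neq_0[of R "\<lambda>x. g x * f x" lam] \<open>prob_space P\<close> PR lam f_nonneg g_nonneg
    by (simp add: I_def)
  ultimately have "I \<noteq> \<infinity> \<and> ln (enn2real I) \<le> ln (enn2real A) / p + ln (enn2real B) / q"
    using ln_nn_integral_mult_le[of "\<lambda>x. f x powr lam" Q "\<lambda>x. g x powr (lam - 1)" p q]
      A_bound B_bound p q pq f_nonneg g_nonneg
    by (simp add: I_Q A_Q B_Q)
  moreover have "ln (enn2real A) / p \<le> lam * (lam * p - 1) * \<rho>\<^sub>1"
    using A_bound(2) p by (simp add: divide_le_eq mult_ac)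
  moreover have "ln (enn2real B) / q \<le> (1 + (lam - 1) * q) * (lam - 1) * \<rho>\<^sub>2"
    using B_bound(2) q by (simp add: divide_le_eq mult_ac)
  ultimately show "I \<noteq> \<infinity>"
    and "ln (enn2real I) \<le> lam * (lam * p - 1) * \<rho>\<^sub>1 + (1 + (lam - 1) * q) * (lam - 1) * \<rho>\<^sub>2"
    by simp_all
qed

lemma ln_moment_composed_density_le:
  fixes f g :: "'a \<Rightarrow> real"
  assumes "prob_space R"
    and "f \<in> borel_measurable R" "\<And>x. 0 \<le> f x" "g \<in> borel_measurable R" "\<And>x. 0 \<le> g x"
    and "Q = density R (\<lambda>x. ennreal (g x))" "P = density Q (\<lambda>x. ennreal (f x))"
    and "prob_space P" "prob_space Q" "D_star P Q \<le> ereal \<rho>\<^sub>1" "D_star Q R \<le> ereal \<rho>\<^sub>2"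
    and lam: "1 < lam" and u: "0 < u"
  shows "(\<integral>\<^sup>+x. ennreal ((g x * f x) powr lam) \<partial>R) \<noteq> \<infinity>"
    and "ln (enn2real (\<integral>\<^sup>+x. ennreal ((g x * f x) powr lam) \<partial>R))
      \<le> lam * (lam - 1) * (\<rho>\<^sub>1 * (1 + u) + \<rho>\<^sub>2 * (1 + 1 / u))"
proof -
  define t where "t = u * (lam - 1) / lam"
  define p where "p = 1 + t"
  define q where "q = 1 + 1 / t"
  have "0 < t" using u lam by (simp add: t_def)
  then have pq: "1 < p" "1 < q" "1 / p + 1 / q = 1"
    by (auto simp: p_def q_def field_simps)
  have mu_p: "lam * p = 1 + (lam - 1) * (1 + u)" using lam by (simp add: p_def t_def field_simps)
  have mu_q: "1 + (lam - 1) * q = lam * (1 + 1 / u)" using lam u by (simp add: q_def t_def field_simps)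
  note Holder = ln_moment_composed_density_le_Holder[OF assms(1-11) lam pq]
  then show "(\<integral>\<^sup>+x. ennreal ((g x * f x) powr lam) \<partial>R) \<noteq> \<infinity>" by simp
  have "lam * (lam * p - 1) * \<rho>\<^sub>1 + (1 + (lam - 1) * q) * (lam - 1) * \<rho>\<^sub>2
      = lam * (lam - 1) * (\<rho>\<^sub>1 * (1 + u) + \<rho>\<^sub>2 * (1 + 1 / u))"
    unfolding mu_p mu_q by (simp add: algebra_simps add_divide_distrib [symmetric])
  with Holder(2) show "ln (enn2real (\<integral>\<^sup>+x. ennreal ((g x * f x) powr lam) \<partial>R))
      \<le> lam * (lam - 1) * (\<rho>\<^sub>1 * (1 + u) + \<rho>\<^sub>2 * (1 + 1 / u))"
    by simp
qed

lemma le_half_square_add: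
  fixes a b X :: real
  assumes a: "0 \<le> a" and b: "0 \<le> b"
    and bound: "\<And>u. 0 < u \<Longrightarrow> X \<le> a\<^sup>2 / 2 * (1 + u) + b\<^sup>2 / 2 * (1 + 1 / u)"
  shows "X \<le> (a + b)\<^sup>2 / 2"
proof (rule field_le_epsilon)
  fix e :: real assume "0 < e"
  define d where "d = 2 * e / (a + b + 1)"
  have d: "0 < d" "d * (a + b) \<le> 2 * e"
    using a b \<open>0 < e\<close> by (auto simp: d_def field_simps)
  \<comment> \<open>u = b / a would give equality; shifting both by d avoids dividing by zero\<close>
  define u where "u = (b + d) / (a + d)"
  have "a\<^sup>2 * u = a * (b + d) * (a / (a + d))"
    using a d by (simp add: u_def power2_eq_square field_simps)
  also have "\<dots> \<le> a * (b + d)"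
    using a b d by (intro mult_left_le) auto
  finally have au: "a\<^sup>2 * u \<le> a * (b + d)" .
  have "b\<^sup>2 * (1 / u) = b * (a + d) * (b / (b + d))"
    using a b d by (simp add: u_def power2_eq_square field_simps)
  also have "\<dots> \<le> b * (a + d)"
    using a b d by (intro mult_left_le) auto
  finally have bu: "b\<^sup>2 * (1 / u) \<le> b * (a + d)" .
  have "X \<le> a\<^sup>2 / 2 * (1 + u) + b\<^sup>2 / 2 * (1 + 1 / u)"
    using a b d by (intro bound) (simp add: u_def)
  also have "\<dots> = (a\<^sup>2 + a\<^sup>2 * u + b\<^sup>2 + b\<^sup>2 * (1 / u)) / 2"
    by (simp add: field_simps)
  also have "\<dots> \<le> (a\<^sup>2 + a * (b + d) + b\<^sup>2 + b * (a + d)) / 2"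
    using au bu by (intro divide_right_mono add_mono) auto
  also have "\<dots> = (a + b)\<^sup>2 / 2 + d * (a + b) / 2"
    by (simp add: power2_eq_square field_simps)
  finally show "X \<le> (a + b)\<^sup>2 / 2 + e" using d by simp
qed

lemma D_star_triangle:
  assumes P: "prob_space P" and Q: "prob_space Q" and R: "prob_space R"
    and sets_P: "sets P = sets R" and sets_Q: "sets Q = sets R" and a: "0 \<le> a" and b: "0 \<le> b"
    and DPQ: "D_star P Q \<le> ereal (a\<^sup>2 / 2)" and DQR: "D_star Q R \<le> ereal (b\<^sup>2 / 2)"
  shows "D_star P R \<le> ereal ((a + b)\<^sup>2 / 2)"
proof -
  obtain g where g: "g \<in> borel_measurable R" "\<And>x. 0 \<le> g x" and Qg: "Q = density R (\<lambda>x. ennreal (g x))"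
    using real_density_of_absolutely_continuous[OF _ _ absolutely_continuous_of_D_star[OF DQR] sets_Q] Q R
    by (auto simp: prob_space_imp_sigma_finite)
  obtain f where f: "f \<in> borel_measurable Q" "\<And>x. 0 \<le> f x" and Pf: "P = density Q (\<lambda>x. ennreal (f x))"
    using real_density_of_absolutely_continuous[OF _ _ absolutely_continuous_of_D_star[OF DPQ]] P Q sets_P sets_Q
    by (auto simp: prob_space_imp_sigma_finite)
  have fR: "f \<in> borel_measurable R" using f(1) Qg by simp
  have PR: "P = density R (\<lambda>x. ennreal (g x * f x))"
    unfolding Pf Qg using f(2) g(2) fR g(1) by (subst density_density_eq) (auto simp: ennreal_mult)
  show ?thesis unfolding D_star_le_iff
  proof (intro allI impI)
    fix lam :: real assume lam: "1 < lam"
    define I where "I = (\<integral>\<^sup>+x. ennreal ((g x * f x) powr lam) \<partial>R)"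
    have fin: "I \<noteq> \<infinity>"
      using ln_moment_composed_density_le(1)[OF R fR f(2) g Qg Pf P Q DPQ DQR lam zero_less_one]
      by (simp add: I_def)
    have bound: "ln (enn2real I) \<le> lam * (lam - 1) * (a\<^sup>2 / 2 * (1 + u) + b\<^sup>2 / 2 * (1 + 1 / u))"
      if "0 < u" for u
      using ln_moment_composed_density_le(2)[OF R fR f(2) g Qg Pf P Q DPQ DQR lam that]
      by (simp add: I_def)
    have "renyi_div lam P R = ereal (ln (enn2real I) / (lam - 1))"
      using renyi_div_density[of R "\<lambda>x. g x * f x" lam] fin PR R fR f(2) g
      by (simp add: prob_space_imp_sigma_finite I_def)
    moreover have "ln (enn2real I) / (lam - 1) / lam \<le> (a + b)\<^sup>2 / 2"
      using a b bound lam by (intro le_half_square_add) (simp_all add: field_simps)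
    ultimately show "renyi_div lam P R / ereal lam \<le> ereal ((a + b)\<^sup>2 / 2)"
      using lam by simp
  qed
qed

lemma partial_DP_of_edge_bounds:
  assumes nonneg: "\<forall>e\<in>E. 0 \<le> w e"
    and prob: "\<And>x. length x = n \<Longrightarrow> prob_space (M x) \<and> sets (M x) = sets Y"
    and edge: "\<And>x x' i. neighbours n x x' i \<Longrightarrow> {x ! i, x' ! i} \<in> E
      \<Longrightarrow> D_inf (M x) (M x') \<le> ereal (w {x ! i, x' ! i})"
  shows "partial_DP n M (sp_dist E w)"
  unfolding partial_DP_def disj_imp
proof (intro allI impI ballI)
  fix x x' :: "'a list" and i S
  assume nb: "neighbours n x x' i" and S: "S \<in> sets (M x)"
    and fin: "sp_dist E w (x ! i) (x' ! i) \<noteq> \<infinity>"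
  have SY: "S \<in> sets Y" using prob nb S by (auto simp: neighbours_def)
  define R where "R y z t \<longleftrightarrow> measure (M y) S \<le> exp t * measure (M z) S" for y z t
  have "\<exists>e. sp_dist E w (x ! i) (x' ! i) = ereal e \<and> R x x' e"
  proof (rule sp_dist_bound_of_edge_bounds[OF _ _ _ nonneg nb fin])
    show "R y y 0" for y by (simp add: R_def)
    show "R y z (s + t)" if "R y y' s" "R y' z t" for y y' z s t
    proof -
      have "measure (M y) S \<le> exp s * (exp t * measure (M z) S)"
        using that by (auto simp: R_def intro: order.trans mult_left_mono)
      then show ?thesis by (simp add: R_def exp_add mult.assoc)
    qed
    show "R y y' (w {y ! j, y' ! j})" if nb': "neighbours n y y' j" "{y ! j, y' ! j} \<in> E" for y y' j
    proof -
      have "length y = n" "length y' = n" using nb' by (simp_all add: neighbours_def)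
      then show ?thesis
        unfolding R_def using prob SY edge[OF nb']
        by (intro measure_le_exp_mult_of_D_inf) (auto simp: prob_space.finite_measure)
    qed
    show "closed {t. R x x' t}"
      unfolding R_def by (intro closed_Collect_le continuous_intros)
  qed
  then show "measure (M x) S \<le> exp (real_of_ereal (sp_dist E w (x ! i) (x' ! i))) * measure (M x') S"
    by (auto simp: R_def)
qed

lemma partial_CDP_of_edge_bounds:
  assumes nonneg: "\<forall>e\<in>E. 0 \<le> w e"
    and prob: "\<And>x. length x = n \<Longrightarrow> prob_space (M x) \<and> sets (M x) = sets Y"
    and edge: "\<And>x x' i. neighbours n x x' i \<Longrightarrow> {x ! i, x' ! i} \<in> E
      \<Longrightarrow> D_star (M x) (M x') \<le> ereal ((w {x ! i, x' ! i})\<^sup>2 / 2)"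
  shows "partial_CDP n M (sp_dist E w)"
  unfolding partial_CDP_def
proof (intro allI impI)
  fix x x' :: "'a list" and i
  assume nb: "neighbours n x x' i"
  define R where "R y z t \<longleftrightarrow> D_star (M y) (M z) \<le> ereal (t\<^sup>2 / 2)" for y z t
  show "D_star (M x) (M x') \<le> (sp_dist E w (x ! i) (x' ! i))\<^sup>2 / 2"
  proof (cases "sp_dist E w (x ! i) (x' ! i) = \<infinity>")
    case False
    have "\<exists>e. sp_dist E w (x ! i) (x' ! i) = ereal e \<and> R x x' e"
    proof (rule sp_dist_bound_of_edge_bounds[OF _ _ _ nonneg nb False])
      show "R y y 0" if "length y = n" for y
        using D_star_self_le_0[of "M y"] prob[OF that] by (simp add: R_def)
      show "R y z (s + t)" if "length y = n" "length y' = n" "length z = n" "0 \<le> s" "0 \<le> t"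
        "R y y' s" "R y' z t" for y y' z s t
        using D_star_triangle[of "M y" "M y'" "M z" s t] prob that by (simp add: R_def)
      show "R y y' (w {y ! j, y' ! j})" if "neighbours n y y' j" "{y ! j, y' ! j} \<in> E" for y y' j
        using edge that by (simp add: R_def)
      show "closed {t. R x x' t}"
        unfolding R_def by (intro closed_Collect_le continuous_intros) auto
    qed
    then show ?thesis by (auto simp: R_def power2_eq_square)
  qed (simp add: power2_eq_square)
qed

theorem lemma2p7:
  fixes E :: "'a set set" and w :: "'a set \<Rightarrow> real" and n :: nat
    and M :: "'a list \<Rightarrow> 'b measure" and Y :: "'b measure"
  assumes graph: "undirected_graph E"
    and nonneg: "\<forall>e\<in>E. w e \<ge> 0"
    and prob: "\<forall>x. length x = n \<longrightarrow> prob_space (M x) \<and> sets (M x) = sets Y"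
  shows "((\<forall>x x' i. neighbours n x x' i \<and> {x ! i, x' ! i} \<in> E \<longrightarrow>
              D_inf (M x) (M x') \<le> ereal (w {x ! i, x' ! i}))
            \<longrightarrow> partial_DP n M (sp_dist E w))
       \<and> ((\<forall>x x' i. neighbours n x x' i \<and> {x ! i, x' ! i} \<in> E \<longrightarrow>
              D_star (M x) (M x') \<le> ereal ((w {x ! i, x' ! i})\<^sup>2 / 2))
            \<longrightarrow> partial_CDP n M (sp_dist E w))"
proof -
  have prob': "\<And>x. length x = n \<Longrightarrow> prob_space (M x) \<and> sets (M x) = sets Y"
    using prob by blast
  show ?thesis
    using partial_DP_of_edge_bounds[where M = M and n = n and Y = Y, OF nonneg prob']
      partial_CDP_of_edge_bounds[where M = M and n = n and Y = Y, OF nonneg prob']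
    by blast
qed

end
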